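(* Let $\underline s\in\overline{\mathcal S}$. Let $\underline u$ be either an infinite sequence of integers or a finite sequence of integers followed by the symbol $*$, and suppose that $\sigma^k(\underline u)\notin\{\mathbb K^+(\underline s),\mathbb K^-(\underline s)\}$ for all $k\geq 1$. Then there exists an external address $\underline r\in\overline{\mathcal S}$ with $\operatorname{itin}_{\underline s}(\underline r)=\underline u$; if $\underline u$ is periodic, then every such $\underline r$ is periodic. Furthermore, if $\underline t\in\overline{\mathcal S}$ and $k\geq 0$, then no two distinct elements of $\sigma^{-k}(\underline t)$ have the same itinerary with respect to $\underline s$. In particular, no two distinct intermediate external addresses have the same itinerary with respect to $\underline s$.
   Context: External addresses. An infinite external address is a sequence $\underline s=s_1s_2s_3\dots$ of integers. For $n\ge 2$, an intermediate external address of length $n$ is a finite string $s_1s_2\dots s_{n-1}\infty$ with $s_1,\dots,s_{n-2}\in\mathbb Z$ and $s_{n-1}\in\mathbb Z+\tfrac12$; the single symbol $\infty$ is the intermediate external address of length $1$. Let $\overline{\mathcal S}$ be the set of all infinite and intermediate external addresses and $\dot{\mathcal S}=\overline{\mathcal S}\setminus\{\infty\}$. $\dot{\mathcal S}$ is totally ordered lexicographically (entries compared as real numbers). $\overline{\mathcal S}$ carries the circular order obtained by adding $\infty$ as a single point lying above and below all of $\dot{\mathcal S}$. The shift $\sigma:\dot{\mathcal S}\to\overline{\mathcal S}$ deletes the first entry (so $\sigma(s_1\infty)=\infty$). For a number $j$ and an address $\underline t$, $j\underline t$ denotes the address with first entry $j$ followed by the entries of $\underline t$. A sequence is periodic if it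 is fixed by some iterate $\sigma^n$, $n\ge1$. Itineraries. For $\underline s\in\dot{\mathcal S}$ and $\underline r\in\overline{\mathcal S}$, $\operatorname{itin}_{\underline s}(\underline r)=u_1u_2\dots$ is defined by: $u_k=j\in\mathbb Z$ if $j\underline s<\sigma^{k-1}(\underline r)<(j+1)\underline s$; $u_k$ is the boundary symbol $\binom{j}{j-1}$ if $\sigma^{k-1}(\underline r)=j\underline s$ ($j\in\mathbb Z$); $u_k=*$ if $\sigma^{k-1}(\underline r)=\infty$, in which case the itinerary terminates with this entry. For $\underline s=\infty$ the same definition is used with $j\underline s,(j+1)\underline s$ replaced by $(j-\frac12)\infty,(j+\frac12)\infty$. The sequences $\operatorname{itin}^+_{\underline s}(\underline r)$, $\operatorname{itin}^-_{\underline s}(\underline r)$ are obtained by replacing every boundary symbol $\binom{j}{j-1}$ by $j$, respectively by $j-1$. The kneading sequence of $\underline s$ is $\mathbb K(\underline s)=\operatorname{itin}_{\underline s}(\underline s)$, and $\mathbb K^{\pm}(\underline s)=\operatorname{itin}^{\pm}_{\underline s}(\underline s)$. On symbol sequences, $\sigma$ also denotes the shift deleting the first entry. *)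

theory Defs
  imports Complex_Main
begin

text \<open>Infinite f      : the infinite address f 0, f 1, f 2, ...  (integers)
  Infty           : the intermediate address of length 1 (the single symbol infinity)
  Interm xs m     : the intermediate address xs_1 ... xs_(n-2) (m + 1/2) infinity,
                    i.e. all entries integers except the last finite one, which is the
                    half-integer m + 1/2.
  This representation is canonical (bijective onto the set of addresses).\<close>

datatype addr = Infinite "nat \<Rightarrow> int" | Infty | Interm "int list" int

fun addr_entry :: "addr \<Rightarrow> nat \<Rightarrow> real option" where
  "addr_entry (Infinite f) i = Some (of_int (f i))"
| "addr_entry Infty i = None"
| "addr_entry (Interm xs m) i =
     (if i < length xs then Some (of_int (xs ! i))
      else if i = length xs then Some (of_int m + 1/2) else None)"

definition addr_less :: "addr \<Rightarrow> addr \<Rightarrow> bool" where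
  "addr_less x y \<longleftrightarrow> (\<exists>k a b. (\<forall>i<k. addr_entry x i = addr_entry y i)
       \<and> addr_entry x k = Some a \<and> addr_entry y k = Some b \<and> a < b)"

fun addr_cons :: "int \<Rightarrow> addr \<Rightarrow> addr" where
  "addr_cons j (Infinite f) = Infinite (\<lambda>i. if i = 0 then j else f (i - 1))"
| "addr_cons j Infty = Interm [] j"
| "addr_cons j (Interm xs m) = Interm (j # xs) m"

fun addr_shift :: "addr \<Rightarrow> addr option" where
  "addr_shift (Infinite f) = Some (Infinite (\<lambda>i. f (Suc i)))"
| "addr_shift Infty = None"
| "addr_shift (Interm [] m) = Some Infty"
| "addr_shift (Interm (x # xs) m) = Some (Interm xs m)"

primrec addr_shiftn :: "nat \<Rightarrow> addr \<Rightarrow> addr option" where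
  "addr_shiftn 0 r = Some r"
| "addr_shiftn (Suc k) r = Option.bind (addr_shiftn k r) addr_shift"

definition addr_periodic :: "addr \<Rightarrow> bool" where
  "addr_periodic r \<longleftrightarrow> (\<exists>n\<ge>1. addr_shiftn n r = Some r)"

definition addr_intermediate :: "addr \<Rightarrow> bool" where
  "addr_intermediate r \<longleftrightarrow> (\<forall>f. r \<noteq> Infinite f)"

text \<open>A symbol sequence: either infinite (SInf) or a finite list followed by the
  terminating symbol * (SFin xs stands for xs followed by * ).\<close>
datatype 'a sseq = SInf "nat \<Rightarrow> 'a" | SFin "'a list"

fun sseq_shiftn :: "nat \<Rightarrow> 'a sseq \<Rightarrow> 'a sseq option" where
  "sseq_shiftn k (SInf f) = Some (SInf (\<lambda>i. f (i + k)))"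
| "sseq_shiftn k (SFin xs) = (if k \<le> length xs then Some (SFin (drop k xs)) else None)"

definition sseq_periodic :: "'a sseq \<Rightarrow> bool" where
  "sseq_periodic u \<longleftrightarrow> (\<exists>n\<ge>1. sseq_shiftn n u = Some u)"

text \<open>Itinerary symbols other than *: integers and boundary symbols (j over j-1).\<close>
datatype isym = SInt int | SBnd int

text \<open>The boundary points: j s for s not Infty, and (j - 1/2) infinity for s = Infty.\<close>
definition bnd :: "addr \<Rightarrow> int \<Rightarrow> addr" where
  "bnd s j = (if s = Infty then Interm [] (j - 1) else addr_cons j s)"

definition itin_sym :: "addr \<Rightarrow> addr \<Rightarrow> isym" where
  "itin_sym s x = (if \<exists>j. x = bnd s j then SBnd (THE j. x = bnd s j)
     else SInt (THE j. addr_less (bnd s j) x \<and> addr_less x (bnd s (j + 1))))"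

definition itin :: "addr \<Rightarrow> addr \<Rightarrow> isym sseq" where
  "itin s r = (if \<exists>k. addr_shiftn k r = Some Infty
     then SFin (map (\<lambda>i. itin_sym s (the (addr_shiftn i r)))
                    [0..<(LEAST k. addr_shiftn k r = Some Infty)])
     else SInf (\<lambda>i. itin_sym s (the (addr_shiftn i r))))"

definition itin_plus :: "addr \<Rightarrow> addr \<Rightarrow> int sseq" where
  "itin_plus s r = map_sseq (\<lambda>a. case a of SInt j \<Rightarrow> j | SBnd j \<Rightarrow> j) (itin s r)"

definition itin_minus :: "addr \<Rightarrow> addr \<Rightarrow> int sseq" where
  "itin_minus s r = map_sseq (\<lambda>a. case a of SInt j \<Rightarrow> j | SBnd j \<Rightarrow> j - 1) (itin s r)"

definition kneading_plus :: "addr \<Rightarrow> int sseq" where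
  "kneading_plus s = itin_plus s s"

definition kneading_minus :: "addr \<Rightarrow> int sseq" where
  "kneading_minus s = itin_minus s s"

end

(* A point of the sector of index j whose tail is x has first digit j or j + 1, according to the
   side of s on which x lies. So an address is determined by its itinerary symbol and its tail,
   hence by its itinerary and its image under a shift; and prepending digits realises every
   finite itinerary none of whose tails is K+(s).

   For an infinite itinerary u, every finite stage is realised by infinitely many infinite
   addresses, and a compactness argument gives a limit address whose tails lie in the closed
   sectors. If a tail hits a boundary point j s, the next tail is s itself; all later returns
   of the limit to s lie on the same side of s, so the itinerary of s resolves its boundary
   symbols uniformly and K+(s) or K-(s) is a shift of u, which is excluded.

   If u is periodic, the orbit of s leaves the sectors prescribed by u within a bounded time D.
   Two addresses with itinerary u that differ in their first digit have tails on opposite sides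
   of s, so their common block after the first digit is an initial block of s of length below D.
   This leaves at most D + 1 addresses with itinerary u; the shift by the period maps them to
   each other, and injectivity turns a coincidence of shifts into periodicity. *)

theory Submission
  imports Defs
begin

section \<open>Entries and the lexicographic order\<close>

fun addr_tl :: "addr \<Rightarrow> addr" where
  "addr_tl (Infinite f) = Infinite (\<lambda>i. f (Suc i))"
| "addr_tl Infty = Infty"
| "addr_tl (Interm [] m) = Infty"
| "addr_tl (Interm (x # xs) m) = Interm xs m"

lemma addr_shift_eq_addr_tl: "addr_shift x = (if x = Infty then None else Some (addr_tl x))"
  by (cases x rule: addr_tl.cases) auto

lemma addr_entry_addr_tl: "addr_entry (addr_tl x) i = addr_entry x (Suc i)"
  by (cases x rule: addr_tl.cases) auto

lemma addr_entry_0_eq_None_iff: "addr_entry x 0 = None \<longleftrightarrow> x = Infty"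
  by (cases x) auto

lemma half_integer_not_Ints: "(of_int m + 1/2 :: real) \<notin> \<int>"
proof
  assume "(of_int m + 1/2 :: real) \<in> \<int>"
  then obtain k where "(of_int m + 1/2 :: real) = of_int k" by (auto elim: Ints_cases)
  then have "(of_int (2*m+1) :: real) = of_int (2*k)" by (simp add: field_simps)
  then have "2*m+1 = 2*k" by linarith
  then show False by presburger
qed

lemma addr_entry_None_mono: "addr_entry x i = None \<Longrightarrow> i \<le> j \<Longrightarrow> addr_entry x j = None"
  by (cases x) (auto split: if_splits)

lemma addr_entry_Suc_eq_None:
  "addr_entry x i = Some v \<Longrightarrow> v \<notin> \<int> \<Longrightarrow> addr_entry x (Suc i) = None"
  by (cases x) (auto split: if_splits)

lemma addr_entry_None_imp_not_Ints:
  assumes "x \<noteq> Infty" "addr_entry x i = None"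
  obtains j v where "j < i" "addr_entry x j = Some v" "v \<notin> \<int>"
  using assms half_integer_not_Ints by (cases x) (fastforce split: if_splits)+

lemma addr_entry_inject: "addr_entry x = addr_entry y \<longleftrightarrow> x = y"
proof
  assume eq: "addr_entry x = addr_entry y"
  have None_iff: "addr_entry x i = None \<longleftrightarrow> addr_entry y i = None" for i
    using eq by simp
  show "x = y"
  proof (cases x; cases y)
    fix f g assume "x = Infinite f" "y = Infinite g"
    then show "x = y" using eq by (simp add: fun_eq_iff)
  next
    fix xs m ys m' assume x: "x = Interm xs m" and y: "y = Interm ys m'"
    have len: "length xs = length ys"
      using None_iff[of "Suc (length xs)"] None_iff[of "Suc (length ys)"] x y
      by (auto split: if_splits)
    have "xs = ys"
    proof (rule nth_equalityI)
      fix i assume "i < length xs"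
      then show "xs ! i = ys ! i" using fun_cong[OF eq, of i] len x y by simp
    qed (fact len)
    moreover have "m = m'" using fun_cong[OF eq, of "length xs"] len x y by simp
    ultimately show "x = y" using x y by simp
  next
    fix f ys m assume "x = Infinite f" "y = Interm ys m"
    then show "x = y" using None_iff[of "Suc (length ys)"] by simp
  next
    fix xs m g assume "x = Interm xs m" "y = Infinite g"
    then show "x = y" using None_iff[of "Suc (length xs)"] by simp
  qed (use None_iff[of 0] in \<open>auto split: if_splits\<close>)
qed simp

lemma addr_first_difference:
  assumes "x \<noteq> Infty" "y \<noteq> Infty" "x \<noteq> y"
  obtains q a b where "\<forall>i<q. addr_entry x i = addr_entry y i"
    "addr_entry x q = Some a" "addr_entry y q = Some b" "a \<noteq> b"
proof -
  define q where "q = (LEAST i. addr_entry x i \<noteq> addr_entry y i)"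
  have "\<exists>i. addr_entry x i \<noteq> addr_entry y i" using assms(3) addr_entry_inject by blast
  then have q_diff: "addr_entry x q \<noteq> addr_entry y q" unfolding q_def by (rule LeastI_ex)
  have q_agree: "\<forall>i<q. addr_entry x i = addr_entry y i"
    unfolding q_def using not_less_Least by blast
  \<comment> \<open>a missing entry at q would make both addresses end at the same earlier half-integer\<close>
  have not_None: "addr_entry z q \<noteq> None" if z: "z \<noteq> Infty" "z = x \<or> z = y" for z
  proof
    assume "addr_entry z q = None"
    then obtain j v where j: "j < q" "addr_entry z j = Some v" "v \<notin> \<int>"
      by (meson addr_entry_None_imp_not_Ints z(1))
    then have "addr_entry x j = Some v" "addr_entry y j = Some v" using q_agree z(2) by auto
    then have "addr_entry x q = None" "addr_entry y q = None"
      using j addr_entry_Suc_eq_None addr_entry_None_mono[of _ "Suc j" q] by auto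
    with q_diff show False by simp
  qed
  from not_None[of x] not_None[of y] assms obtain a b
    where "addr_entry x q = Some a" "addr_entry y q = Some b" by blast
  with q_diff show thesis using that[OF q_agree] by auto
qed

lemma addr_less_iff_at_difference:
  assumes "\<forall>i<q. addr_entry x i = addr_entry y i"
    and "addr_entry x q = Some a" "addr_entry y q = Some b" "a \<noteq> b"
  shows "addr_less x y \<longleftrightarrow> a < b"
proof
  assume "addr_less x y"
  then obtain k a' b' where "\<forall>i<k. addr_entry x i = addr_entry y i"
    "addr_entry x k = Some a'" "addr_entry y k = Some b'" "a' < b'"
    unfolding addr_less_def by blast
  with assms show "a < b" by (cases k q rule: linorder_cases) auto
qed (use assms in \<open>auto simp: addr_less_def\<close>)

lemma addr_less_irrefl [simp]: "\<not> addr_less x x"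
  by (auto simp: addr_less_def)

lemma addr_less_Infty [simp]: "\<not> addr_less Infty y" "\<not> addr_less x Infty"
  by (auto simp: addr_less_def)

lemma addr_less_trans: "addr_less x y \<Longrightarrow> addr_less y z \<Longrightarrow> addr_less x z"
proof -
  assume "addr_less x y" "addr_less y z"
  then obtain k1 a1 b1 k2 a2 b2 where
    1: "\<forall>i<k1. addr_entry x i = addr_entry y i" "addr_entry x k1 = Some a1"
       "addr_entry y k1 = Some b1" "a1 < b1" and
    2: "\<forall>i<k2. addr_entry y i = addr_entry z i" "addr_entry y k2 = Some a2"
       "addr_entry z k2 = Some b2" "a2 < b2"
    unfolding addr_less_def by blast
  show "addr_less x z"
  proof (cases k1 k2 rule: linorder_cases)
    case less with 1 2 show ?thesis
      unfolding addr_less_def by (intro exI[of _ k1] exI[of _ a1] exI[of _ b1]) auto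
  next
    case equal with 1 2 show ?thesis
      unfolding addr_less_def by (intro exI[of _ k1] exI[of _ a1] exI[of _ b2]) auto
  next
    case greater with 1 2 show ?thesis
      unfolding addr_less_def by (intro exI[of _ k2] exI[of _ a2] exI[of _ b2]) auto
  qed
qed

lemma addr_less_asym: "addr_less x y \<Longrightarrow> \<not> addr_less y x"
  using addr_less_trans addr_less_irrefl by blast

lemma addr_less_linear:
  assumes "x \<noteq> Infty" "y \<noteq> Infty"
  shows "addr_less x y \<or> x = y \<or> addr_less y x"
proof (rule ccontr)
  assume neither: "\<not> ?thesis"
  then obtain q a b where "\<forall>i<q. addr_entry x i = addr_entry y i"
    "addr_entry x q = Some a" "addr_entry y q = Some b" "a \<noteq> b"
    using addr_first_difference assms by metis
  with neither show False
    using addr_less_iff_at_difference[of q x y a b] addr_less_iff_at_difference[of q y x b a]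
    by (auto simp: neq_iff)
qed

lemma addr_less_stable:
  assumes "x \<noteq> Infty" "y \<noteq> Infty" "x \<noteq> y"
  obtains q where "\<And>x'. \<forall>i\<le>q. addr_entry x' i = addr_entry x i \<Longrightarrow>
    (addr_less x' y \<longleftrightarrow> addr_less x y) \<and> (addr_less y x' \<longleftrightarrow> addr_less y x)"
proof -
  obtain q a b where q: "\<forall>i<q. addr_entry x i = addr_entry y i"
    "addr_entry x q = Some a" "addr_entry y q = Some b" "a \<noteq> b"
    using addr_first_difference assms by metis
  show thesis
  proof (rule that[of q])
    fix x' assume "\<forall>i\<le>q. addr_entry x' i = addr_entry x i"
    with q have "\<forall>i<q. addr_entry x' i = addr_entry y i" "addr_entry x' q = Some a" by auto
    with q show "(addr_less x' y \<longleftrightarrow> addr_less x y) \<and> (addr_less y x' \<longleftrightarrow> addr_less y x)"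
      using addr_less_iff_at_difference[of q _ y a b] addr_less_iff_at_difference[of q y _ b a]
      by (simp add: eq_commute[of "addr_entry y _"])
  qed
qed

lemma addr_less_unfold:
  "addr_less x y \<longleftrightarrow> (\<exists>a b. addr_entry x 0 = Some a \<and> addr_entry y 0 = Some b \<and>
     (a < b \<or> a = b \<and> addr_less (addr_tl x) (addr_tl y)))"
proof
  assume "addr_less x y"
  then obtain k a b where k: "\<forall>i<k. addr_entry x i = addr_entry y i"
    "addr_entry x k = Some a" "addr_entry y k = Some b" "a < b"
    unfolding addr_less_def by blast
  show "\<exists>a b. addr_entry x 0 = Some a \<and> addr_entry y 0 = Some b \<and>
     (a < b \<or> a = b \<and> addr_less (addr_tl x) (addr_tl y))"
  proof (cases k)
    case 0 with k show ?thesis by auto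
  next
    case (Suc k')
    then have "addr_entry x 0 = addr_entry y 0" "addr_entry x 0 \<noteq> None"
      using k addr_entry_None_mono[of x 0 k] by auto
    moreover have "addr_less (addr_tl x) (addr_tl y)"
      unfolding addr_less_def using k Suc by (intro exI[of _ k']) (auto simp: addr_entry_addr_tl)
    ultimately show ?thesis by auto
  qed
next
  assume "\<exists>a b. addr_entry x 0 = Some a \<and> addr_entry y 0 = Some b \<and>
     (a < b \<or> a = b \<and> addr_less (addr_tl x) (addr_tl y))"
  then obtain a b where ab: "addr_entry x 0 = Some a" "addr_entry y 0 = Some b"
    "a < b \<or> a = b \<and> addr_less (addr_tl x) (addr_tl y)" by blast
  show "addr_less x y"
  proof (cases "a < b")
    case True with ab show ?thesis
      unfolding addr_less_def by (intro exI[of _ 0] exI[of _ a] exI[of _ b]) auto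
  next
    case False
    with ab obtain k a' b' where "\<forall>i<k. addr_entry x (Suc i) = addr_entry y (Suc i)"
      "addr_entry x (Suc k) = Some a'" "addr_entry y (Suc k) = Some b'" "a' < b'"
      unfolding addr_less_def addr_entry_addr_tl by blast
    with ab False show ?thesis unfolding addr_less_def
      by (intro exI[of _ "Suc k"]) (auto simp: less_Suc_eq_0_disj)
  qed
qed

lemma addr_less_tl_iff:
  assumes "addr_entry x 0 = addr_entry y 0"
  shows "addr_less x y \<longleftrightarrow> addr_less (addr_tl x) (addr_tl y)"
proof (cases "x = Infty")
  case True
  with assms have "y = Infty" by (metis addr_entry_0_eq_None_iff)
  with True show ?thesis by simp
next
  case False
  then obtain a where "addr_entry x 0 = Some a" "addr_entry y 0 = Some a"
    using assms by (metis addr_entry_0_eq_None_iff not_None_eq)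
  then show ?thesis by (subst addr_less_unfold[of x y]) simp
qed

lemma addr_less_funpow_addr_tl:
  "\<forall>i<d. addr_entry x i = addr_entry y i \<Longrightarrow>
   addr_less x y \<longleftrightarrow> addr_less ((addr_tl ^^ d) x) ((addr_tl ^^ d) y)"
proof (induction d arbitrary: x y)
  case (Suc d)
  then have "addr_less x y \<longleftrightarrow> addr_less (addr_tl x) (addr_tl y)"
    by (intro addr_less_tl_iff) simp
  also have "\<dots> \<longleftrightarrow> addr_less ((addr_tl ^^ d) (addr_tl x)) ((addr_tl ^^ d) (addr_tl y))"
    using Suc by (intro Suc.IH) (auto simp: addr_entry_addr_tl)
  finally show ?case by (simp only: funpow_Suc_right o_apply)
qed simp

lemma addr_between_common_prefix:
  assumes "addr_less a x" "addr_less x b" "\<forall>i<n. addr_entry a i = addr_entry b i"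
  shows "(\<forall>i<n. addr_entry x i = addr_entry a i) \<and>
    (\<forall>i\<le>n. addr_less ((addr_tl ^^ i) a) ((addr_tl ^^ i) x) \<and>
      addr_less ((addr_tl ^^ i) x) ((addr_tl ^^ i) b))"
  using assms
proof (induction n arbitrary: a x b)
  case (Suc n)
  from Suc.prems(1) obtain ea ex where e1: "addr_entry a 0 = Some ea" "addr_entry x 0 = Some ex"
    "ea < ex \<or> ea = ex \<and> addr_less (addr_tl a) (addr_tl x)"
    unfolding addr_less_unfold[of a x] by blast
  from Suc.prems(2) obtain eb where e2: "addr_entry b 0 = Some eb"
    "ex < eb \<or> ex = eb \<and> addr_less (addr_tl x) (addr_tl b)"
    unfolding addr_less_unfold[of x b] using e1(2) by auto
  have "ea = eb" using Suc.prems(3) e1(1) e2(1) by force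
  with e1 e2 have tl: "ea = ex"
    "addr_less (addr_tl a) (addr_tl x)" "addr_less (addr_tl x) (addr_tl b)"
    by auto
  have "\<forall>i<n. addr_entry (addr_tl a) i = addr_entry (addr_tl b) i"
    using Suc.prems(3) by (simp add: addr_entry_addr_tl)
  from Suc.IH[OF tl(2,3) this] have IH:
    "\<forall>i<n. addr_entry x (Suc i) = addr_entry a (Suc i)"
    "\<forall>i\<le>n. addr_less ((addr_tl ^^ Suc i) a) ((addr_tl ^^ Suc i) x) \<and>
       addr_less ((addr_tl ^^ Suc i) x) ((addr_tl ^^ Suc i) b)"
    by (simp_all only: addr_entry_addr_tl funpow_Suc_right o_apply, blast+)
  have "\<forall>i<Suc n. addr_entry x i = addr_entry a i"
    using IH(1) e1(1,2) tl(1) by (auto simp: less_Suc_eq_0_disj)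
  moreover have "\<forall>i\<le>Suc n. addr_less ((addr_tl ^^ i) a) ((addr_tl ^^ i) x) \<and>
      addr_less ((addr_tl ^^ i) x) ((addr_tl ^^ i) b)"
  proof (intro allI impI)
    fix i assume "i \<le> Suc n"
    then show "addr_less ((addr_tl ^^ i) a) ((addr_tl ^^ i) x) \<and>
      addr_less ((addr_tl ^^ i) x) ((addr_tl ^^ i) b)"
      using IH(2) Suc.prems(1,2) by (cases i) auto
  qed
  ultimately show ?case ..
qed simp

lemma funpow_addr_tl_Infinite: "(addr_tl ^^ k) (Infinite g) = Infinite (\<lambda>i. g (i + k))"
  by (induction k) auto

lemma funpow_addr_tl_Interm: "(addr_tl ^^ Suc (length xs)) (Interm xs m) = Infty"
  by (induction xs) (simp_all del: funpow.simps add: funpow_Suc_right)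

lemma addr_tl_addr_cons [simp]: "addr_tl (addr_cons a x) = x"
  by (cases x) auto

lemma addr_cons_inject: "addr_cons a x = addr_cons b y \<longleftrightarrow> a = b \<and> x = y"
  by (cases x; cases y)
    (auto simp: fun_eq_iff split: if_splits dest: spec[of _ 0] spec[of _ "Suc _"])

lemma addr_cons_addr_tl:
  assumes "x \<noteq> Infty"
  obtains c where "x = addr_cons c (addr_tl x)"
  using assms by (cases x rule: addr_tl.cases) (auto simp: fun_eq_iff split: nat.splits)

lemma addr_cons_not_Infty [simp]: "addr_cons a x \<noteq> Infty"
  by (cases x) auto

lemma addr_entry_addr_cons_0:
  "addr_entry (addr_cons a x) 0 = Some (of_int a + (if x = Infty then 1/2 else 0))"
  by (cases x) auto

lemma addr_less_addr_cons:
  "addr_less (addr_cons a x) (addr_cons b y) \<longleftrightarrow>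
   a < b \<or> a = b \<and> x \<noteq> Infty \<and> (y = Infty \<or> addr_less x y)"
  by (subst addr_less_unfold) (auto simp: addr_entry_addr_cons_0)

lemma Infinite_eq_addr_cons:
  "Infinite (\<lambda>i. g (i + m)) = addr_cons (g m) (Infinite (\<lambda>i. g (i + Suc m)))"
  by (auto simp: fun_eq_iff)

declare addr_cons.simps(1,2) [simp del]

lemma addr_cons_Infinite: "addr_cons a (Infinite h) = Infinite (case_nat a h)"
  by (auto simp: addr_cons.simps(1) fun_eq_iff split: nat.splits)

section \<open>Sectors and itinerary symbols\<close>

definition sector :: "addr \<Rightarrow> int \<Rightarrow> addr \<Rightarrow> bool" where
  "sector s j z \<longleftrightarrow> addr_less (bnd s j) z \<and> addr_less z (bnd s (j + 1))"

lemma bnd_eq: "bnd s j = addr_cons (if s = Infty then j - 1 else j) s"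
  by (simp add: bnd_def addr_cons.simps)

lemma bnd_less_bnd_iff: "addr_less (bnd s a) (bnd s b) \<longleftrightarrow> a < b"
  by (auto simp: bnd_eq addr_less_addr_cons)

lemma bnd_eq_bnd_iff: "bnd s a = bnd s b \<longleftrightarrow> a = b"
  by (auto simp: bnd_eq addr_cons_inject)

lemma not_sector_bnd: "\<not> sector s j (bnd s c)"
  by (auto simp: sector_def bnd_less_bnd_iff)

lemma sector_not_Infty: "sector s j z \<Longrightarrow> z \<noteq> Infty"
  by (auto simp: sector_def)

lemma sector_unique: "sector s j z \<Longrightarrow> sector s j' z \<Longrightarrow> j = j'"
proof (induction j j' rule: linorder_less_wlog)
  case (less j j')
  then have "addr_less (bnd s j') (bnd s (j + 1))"
    unfolding sector_def using addr_less_trans by blast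
  with less show ?case by (simp add: bnd_less_bnd_iff)
qed auto

lemma sector_between:
  "sector s j x \<Longrightarrow> sector s j y \<Longrightarrow> addr_less x z \<Longrightarrow> addr_less z y \<Longrightarrow> sector s j z"
  unfolding sector_def using addr_less_trans by blast

lemma sector_addr_cons_iff:
  "sector s j (addr_cons a x) \<longleftrightarrow> x \<noteq> s \<and> a = (if addr_less x s then j + 1 else j)"
proof (cases "x = Infty \<or> s = Infty")
  case True
  then show ?thesis by (auto simp: sector_def bnd_eq addr_less_addr_cons)
next
  case False
  then have "addr_less x s \<or> x = s \<or> addr_less s x" using addr_less_linear by blast
  with False show ?thesis
    by (auto simp: sector_def bnd_eq addr_less_addr_cons dest: addr_less_asym)
qed

lemma itin_sym_bnd [simp]: "itin_sym s (bnd s c) = SBnd c"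
  by (simp add: itin_sym_def bnd_eq_bnd_iff)

lemma itin_sym_sector: "sector s j z \<Longrightarrow> itin_sym s z = SInt j"
  unfolding itin_sym_def sector_def[symmetric]
  using not_sector_bnd sector_unique by (metis (no_types, lifting) the_equality)

lemma bnd_or_sector:
  assumes "z \<noteq> Infty"
  obtains c where "z = bnd s c" | j where "sector s j z"
proof -
  obtain c where c: "z = addr_cons c (addr_tl z)" using addr_cons_addr_tl assms by blast
  show thesis
  proof (cases "addr_tl z = s")
    case True
    with c have "z = bnd s (if s = Infty then c + 1 else c)" by (simp add: bnd_eq)
    then show thesis by (rule that(1))
  next
    case False
    then have "sector s (if addr_less (addr_tl z) s then c - 1 else c) z"
      by (subst c) (simp add: sector_addr_cons_iff)
    then show thesis by (rule that(2))
  qed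
qed

lemma itin_sym_eq_SInt_iff: "z \<noteq> Infty \<Longrightarrow> itin_sym s z = SInt j \<longleftrightarrow> sector s j z"
  by (cases rule: bnd_or_sector[of z s]) (auto simp: itin_sym_sector not_sector_bnd sector_unique)

lemma itin_sym_inj_on_addr_tl:
  assumes "r1 \<noteq> Infty" "r2 \<noteq> Infty" "addr_tl r1 = addr_tl r2" "itin_sym s r1 = itin_sym s r2"
  shows "r1 = r2"
proof (cases rule: bnd_or_sector[OF assms(1), of s])
  case (1 c)
  with assms(2,4) have "r2 = bnd s c"
    by (cases rule: bnd_or_sector[OF assms(2), of s]) (auto simp: itin_sym_sector)
  with 1 show ?thesis by simp
next
  case (2 j)
  with assms have "sector s j r2" by (metis itin_sym_sector itin_sym_eq_SInt_iff)
  moreover obtain c1 c2 where "r1 = addr_cons c1 (addr_tl r1)" "r2 = addr_cons c2 (addr_tl r2)"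
    using addr_cons_addr_tl assms(1,2) by metis
  ultimately show ?thesis using 2 assms(3) sector_addr_cons_iff by metis
qed

lemma sector_closure:
  assumes "x \<noteq> Infty"
    and approx: "\<And>q. \<exists>x'. sector s j x' \<and> (\<forall>i\<le>q. addr_entry x' i = addr_entry x i)"
  shows "sector s j x \<or> x = bnd s j \<or> x = bnd s (j + 1)"
proof (rule ccontr)
  assume "\<not> ?thesis"
  then have ne: "x \<noteq> bnd s j" "x \<noteq> bnd s (j + 1)" and "\<not> sector s j x" by auto
  have "bnd s j \<noteq> Infty" "bnd s (j + 1) \<noteq> Infty" by (simp_all add: bnd_eq)
  then obtain q1 q2 where
    q1: "\<And>x'. \<forall>i\<le>q1. addr_entry x' i = addr_entry x i \<Longrightarrow>
      (addr_less x' (bnd s j) \<longleftrightarrow> addr_less x (bnd s j)) \<and>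
      (addr_less (bnd s j) x' \<longleftrightarrow> addr_less (bnd s j) x)" and
    q2: "\<And>x'. \<forall>i\<le>q2. addr_entry x' i = addr_entry x i \<Longrightarrow>
      (addr_less x' (bnd s (j + 1)) \<longleftrightarrow> addr_less x (bnd s (j + 1))) \<and>
      (addr_less (bnd s (j + 1)) x' \<longleftrightarrow> addr_less (bnd s (j + 1)) x)"
    using addr_less_stable[OF assms(1) _ ne(1)] addr_less_stable[OF assms(1) _ ne(2)] by metis
  obtain x' where "sector s j x'" "\<forall>i\<le>max q1 q2. addr_entry x' i = addr_entry x i"
    using approx by blast
  with q1[of x'] q2[of x'] have "sector s j x" by (simp add: sector_def)
  with \<open>\<not> sector s j x\<close> show False ..
qed

lemma Infinite_eq_bnd_iff:
  "Infinite (\<lambda>i. g (i + m)) = bnd s c \<longleftrightarrow> Infinite (\<lambda>i. g (i + Suc m)) = s \<and> c = g m"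
proof -
  have "Infinite (\<lambda>i. g (i + m)) = bnd s c \<longleftrightarrow>
    addr_cons (g m) (Infinite (\<lambda>i. g (i + Suc m))) = addr_cons (if s = Infty then c - 1 else c) s"
    by (metis Infinite_eq_addr_cons bnd_eq)
  then show ?thesis by (auto simp: addr_cons_inject)
qed

section \<open>Itineraries and their injectivity\<close>

fun sseq_cons :: "'a \<Rightarrow> 'a sseq \<Rightarrow> 'a sseq" where
  "sseq_cons a (SFin xs) = SFin (a # xs)"
| "sseq_cons a (SInf f) = SInf (case_nat a f)"

lemma sseq_cons_inject: "sseq_cons a u = sseq_cons b v \<longleftrightarrow> a = b \<and> u = v"
proof
  assume eq: "sseq_cons a u = sseq_cons b v"
  show "a = b \<and> u = v"
  proof (cases u; cases v)
    fix f g assume "u = SInf f" "v = SInf g"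
    with eq have "case_nat a f = case_nat b g" by simp
    then have "a = b" "\<forall>i. f i = g i" by (metis old.nat.simps(4,5))+
    with \<open>u = SInf f\<close> \<open>v = SInf g\<close> show ?thesis by auto
  qed (use eq in auto)
qed simp

lemma sseq_shiftn_Suc_sseq_cons: "sseq_shiftn (Suc k) (sseq_cons a u) = sseq_shiftn k u"
  by (cases u) auto

lemma itin_plus_SInt: "itin s r = map_sseq SInt u \<Longrightarrow> itin_plus s r = u"
  by (simp add: itin_plus_def sseq.map_comp comp_def sseq.map_ident)

lemma addr_shiftn_Suc: "addr_shiftn (Suc k) r = Option.bind (addr_shift r) (addr_shiftn k)"
  by (induction k) (auto simp: Option.bind_assoc)

declare addr_shiftn.simps(2) [simp del]

lemma addr_shiftn_Suc_Infty [simp]: "addr_shiftn (Suc k) Infty = None"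
  by (subst addr_shiftn_Suc) simp

lemma addr_shiftn_Suc_addr_tl: "r \<noteq> Infty \<Longrightarrow> addr_shiftn (Suc k) r = addr_shiftn k (addr_tl r)"
  by (subst addr_shiftn_Suc) (simp add: addr_shift_eq_addr_tl)

lemma addr_shiftn_Infinite: "addr_shiftn k (Infinite g) = Some (Infinite (\<lambda>i. g (i + k)))"
  by (induction k arbitrary: g) (simp_all add: addr_shiftn_Suc_addr_tl)

lemma itin_Infty [simp]: "itin s Infty = SFin []"
proof -
  have "(LEAST k. addr_shiftn k Infty = Some Infty) = 0" by (rule Least_equality) auto
  then show ?thesis by (auto simp: itin_def intro: exI[of _ 0])
qed

lemma itin_Infinite: "itin s (Infinite g) = SInf (\<lambda>i. itin_sym s (Infinite (\<lambda>k. g (k + i))))"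
  by (simp add: itin_def addr_shiftn_Infinite)

lemma itin_addr_tl:
  assumes "r \<noteq> Infty"
  shows "itin s r = sseq_cons (itin_sym s r) (itin s (addr_tl r))"
proof -
  let ?P = "\<lambda>r k. addr_shiftn k r = Some Infty"
  let ?sym = "\<lambda>r i. itin_sym s (the (addr_shiftn i r))"
  have shift: "addr_shiftn (Suc k) r = addr_shiftn k (addr_tl r)" for k
    using addr_shiftn_Suc_addr_tl[OF assms] .
  have not0: "\<not> ?P r 0" using assms by simp
  show ?thesis
  proof (cases "\<exists>k. ?P (addr_tl r) k")
    case True
    then obtain k where "?P r (Suc k)" by (auto simp: shift)
    then have "(LEAST k. ?P r k) = Suc (LEAST k. ?P r (Suc k))" using not0 by (rule Least_Suc)
    then have "(LEAST k. ?P r k) = Suc (LEAST k. ?P (addr_tl r) k)" by (simp only: shift)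
    moreover have "\<exists>k. ?P r k" using \<open>?P r (Suc k)\<close> by blast
    ultimately show ?thesis
      using True by (auto simp: itin_def map_upt_Suc shift simp del: upt_Suc)
  next
    case False
    then have "\<not> ?P r k" for k using not0 by (cases k) (auto simp: shift)
    with False show ?thesis
      by (auto simp: itin_def fun_eq_iff shift split: nat.splits)
  qed
qed

lemma itin_inj_on_shiftn_preimage:
  "addr_shiftn k r1 = Some t \<Longrightarrow> addr_shiftn k r2 = Some t \<Longrightarrow> itin s r1 = itin s r2 \<Longrightarrow> r1 = r2"
proof (induction k arbitrary: r1 r2)
  case (Suc k)
  then have ne: "r1 \<noteq> Infty" "r2 \<noteq> Infty" by auto
  with Suc.prems(3) have "itin_sym s r1 = itin_sym s r2" "itin s (addr_tl r1) = itin s (addr_tl r2)"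
    by (metis itin_addr_tl sseq_cons_inject)+
  moreover from this(2) have "addr_tl r1 = addr_tl r2"
    using Suc.IH Suc.prems(1,2) by (simp add: addr_shiftn_Suc_addr_tl ne)
  ultimately show ?case using itin_sym_inj_on_addr_tl ne by blast
qed simp

lemma intermediate_itin_length:
  assumes "addr_intermediate r"
  obtains us where "itin s r = SFin us" "addr_shiftn (length us) r = Some Infty"
proof -
  have "\<exists>us. itin s (Interm xs m) = SFin us \<and> addr_shiftn (length us) (Interm xs m) = Some Infty"
    for xs m
  proof (induction xs)
    case Nil
    show ?case by (simp add: itin_addr_tl addr_shiftn_Suc_addr_tl)
  next
    case (Cons x xs)
    then show ?case by (auto simp: itin_addr_tl addr_shiftn_Suc_addr_tl)
  qed
  with assms that show thesis by (cases r) (auto simp: addr_intermediate_def intro: exI[of _ 0])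
qed

lemma itin_inj_on_intermediate:
  assumes "addr_intermediate r1" "addr_intermediate r2" "itin s r1 = itin s r2"
  shows "r1 = r2"
proof -
  obtain us1 us2 where "itin s r1 = SFin us1" "addr_shiftn (length us1) r1 = Some Infty"
    "itin s r2 = SFin us2" "addr_shiftn (length us2) r2 = Some Infty"
    using intermediate_itin_length assms(1,2) by metis
  with assms(3) show ?thesis using itin_inj_on_shiftn_preimage by (metis sseq.inject(2))
qed

lemma itin_eq_SInf_imp_Infinite:
  assumes "itin s r = SInf u"
  obtains g where "r = Infinite g"
  using assms intermediate_itin_length[of r s] by (auto simp: addr_intermediate_def)

lemma itin_addr_cons_sector:
  assumes "r \<noteq> s"
  shows "itin s (addr_cons (if addr_less r s then a + 1 else a) r) = sseq_cons (SInt a) (itin s r)"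
  using assms by (simp add: itin_addr_tl itin_sym_sector sector_addr_cons_iff)

lemma itin_exists_SFin:
  assumes "\<forall>k\<ge>1. sseq_shiftn k (SFin xs) \<noteq> Some (kneading_plus s)"
  shows "\<exists>r. itin s r = SFin (map SInt xs)"
  using assms
proof (induction xs)
  case Nil
  show ?case by (auto intro: exI[of _ Infty])
next
  case (Cons a xs)
  have shift: "sseq_shiftn (Suc k) (SFin (a # xs)) = sseq_shiftn k (SFin xs)" for k
    using sseq_shiftn_Suc_sseq_cons[of k a "SFin xs"] by simp
  have "\<forall>k\<ge>1. sseq_shiftn k (SFin xs) \<noteq> Some (kneading_plus s)"
  proof (intro allI impI)
    fix k :: nat assume "k \<ge> 1"
    then show "sseq_shiftn k (SFin xs) \<noteq> Some (kneading_plus s)"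
      using Cons.prems[rule_format, of "Suc k"] shift[of k] by simp
  qed
  then obtain r where r: "itin s r = SFin (map SInt xs)" using Cons.IH by blast
  have "r \<noteq> s"
  proof
    assume "r = s"
    with r have "kneading_plus s = SFin xs"
      unfolding kneading_plus_def by (intro itin_plus_SInt) simp
    with Cons.prems shift[of 0] show False by auto
  qed
  with r show ?case by (metis itin_addr_cons_sector sseq_cons.simps(1) list.simps(9))
qed

section \<open>Infinite itineraries\<close>

lemma finitely_branching_limit:
  fixes A :: "nat \<Rightarrow> (nat \<Rightarrow> 'a) set" and C :: "nat \<Rightarrow> 'a set"
  assumes nonempty: "\<And>N. A N \<noteq> {}"
    and antimono: "\<And>N N'. N \<le> N' \<Longrightarrow> A N' \<subseteq> A N"
    and finite_C: "\<And>i. finite (C i)"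
    and in_C: "\<And>N h i. h \<in> A N \<Longrightarrow> i < N \<Longrightarrow> h i \<in> C i"
  obtains g where "\<And>N M. \<exists>h\<in>A N. \<forall>i<M. h i = g i"
proof -
  define good where "good p \<longleftrightarrow> (\<forall>N. \<exists>h\<in>A N. map h [0..<length p] = p)" for p
  have extend: "\<exists>c\<in>C (length p). good (p @ [c])" if "good p" for p
  proof (rule ccontr)
    let ?bad = "\<lambda>N c. \<forall>h\<in>A N. map h [0..<Suc (length p)] \<noteq> p @ [c]"
    assume "\<not> ?thesis"
    then have bad: "\<exists>N. ?bad N c" if "c \<in> C (length p)" for c
      using that by (auto simp: good_def)
    have "eventually (\<lambda>N. ?bad N c) sequentially" if "c \<in> C (length p)" for c
    proof -
      from bad[OF that] obtain N0 where "?bad N0 c" ..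
      then show ?thesis by (intro eventually_sequentiallyI[of N0]) (use antimono in blast)
    qed
    then have "eventually (\<lambda>N. \<forall>c\<in>C (length p). ?bad N c) sequentially"
      by (intro eventually_ball_finite[OF finite_C]) blast
    moreover have "eventually (\<lambda>N. N > length p) sequentially"
      by (rule eventually_gt_at_top)
    ultimately have "eventually (\<lambda>N. (\<forall>c\<in>C (length p). ?bad N c) \<and> N > length p) sequentially"
      by (rule eventually_conj)
    then obtain N where N: "\<forall>c\<in>C (length p). ?bad N c" "N > length p"
      using eventually_happens'[OF sequentially_bot] by blast
    from \<open>good p\<close> obtain h where "h \<in> A N" "map h [0..<length p] = p"
      unfolding good_def by blast
    moreover from this have "h (length p) \<in> C (length p)" using in_C N(2) by blast
    ultimately show False using N(1) by auto
  qed
  define next_digit where "next_digit p = (SOME c. c \<in> C (length p) \<and> good (p @ [c]))" for p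
  define pre where "pre n = ((\<lambda>p. p @ [next_digit p]) ^^ n) []" for n
  have pre_Suc: "pre (Suc n) = pre n @ [next_digit (pre n)]" for n
    by (simp add: pre_def)
  have good_pre: "good (pre n) \<and> length (pre n) = n" for n
  proof (induction n)
    case 0
    then show ?case using nonempty by (auto simp: good_def pre_def)
  next
    case (Suc n)
    then have "\<exists>c. c \<in> C (length (pre n)) \<and> good (pre n @ [c])" using extend by blast
    then have "good (pre (Suc n))"
      unfolding pre_Suc next_digit_def by (rule someI2_ex) blast
    with Suc show ?case by (simp add: pre_Suc)
  qed
  define g where "g i = pre (Suc i) ! i" for i
  have pre_eq: "pre n = map g [0..<n]" for n
  proof (induction n)
    case (Suc n)
    then show ?case using good_pre[of n] by (simp add: pre_Suc g_def nth_append)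
  qed (simp add: pre_def)
  show thesis
  proof (rule that)
    fix N M
    from good_pre[of M] obtain h where "h \<in> A N" "map h [0..<M] = map g [0..<M]"
      unfolding good_def pre_eq by auto
    then show "\<exists>h\<in>A N. \<forall>i<M. h i = g i" by (intro bexI[of _ h]) (auto simp: map_eq_conv)
  qed
qed

definition sector_seqs :: "addr \<Rightarrow> (nat \<Rightarrow> int) \<Rightarrow> (nat \<Rightarrow> int) set" where
  "sector_seqs s f = {g. \<forall>m. sector s (f m) (Infinite (\<lambda>i. g (i + m)))}"

definition sector_seqs_upto :: "addr \<Rightarrow> (nat \<Rightarrow> int) \<Rightarrow> nat \<Rightarrow> (nat \<Rightarrow> int) set" where
  "sector_seqs_upto s f n = {g. \<forall>m<n. sector s (f m) (Infinite (\<lambda>i. g (i + m)))}"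

lemma itin_Infinite_eq_SInt_iff:
  "itin s (Infinite g) = SInf (\<lambda>i. SInt (f i)) \<longleftrightarrow> g \<in> sector_seqs s f"
  by (auto simp: itin_Infinite sector_seqs_def fun_eq_iff itin_sym_eq_SInt_iff)

lemma itin_of_sectors:
  assumes "\<forall>i. sector s (w i) ((addr_tl ^^ i) r)"
  shows "itin s r = SInf (\<lambda>i. SInt (w i))"
proof (cases r)
  case (Infinite g)
  with assms show ?thesis
    by (simp add: itin_Infinite_eq_SInt_iff sector_seqs_def funpow_addr_tl_Infinite)
next
  case Infty
  with assms show ?thesis using sector_not_Infty by (metis funpow_0)
next
  case (Interm xs m)
  with assms show ?thesis using sector_not_Infty funpow_addr_tl_Interm by metis
qed

lemma sector_Infinite_digit:
  "sector s j (Infinite (\<lambda>i. g (i + m))) \<Longrightarrow> g m = j \<or> g m = j + 1"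
  by (subst (asm) Infinite_eq_addr_cons) (auto simp: sector_addr_cons_iff split: if_splits)

lemma infinite_sector_seqs_upto: "infinite (sector_seqs_upto s f n)"
proof (induction n arbitrary: f)
  case 0
  have "infinite (UNIV :: (nat \<Rightarrow> int) set)" using finite_fun_UNIVD2 infinite_UNIV_int by blast
  then show ?case by (simp add: sector_seqs_upto_def)
next
  case (Suc n)
  let ?T = "sector_seqs_upto s (\<lambda>i. f (Suc i)) n - {h. Infinite h = s}"
  let ?lift = "\<lambda>h. case_nat (if addr_less (Infinite h) s then f 0 + 1 else f 0) h"
  have "{h. Infinite h = s} \<subseteq> (case s of Infinite h0 \<Rightarrow> {h0} | _ \<Rightarrow> {})"
    by (auto split: addr.splits)
  then have "finite {h. Infinite h = s}" by (rule finite_subset) (simp split: addr.splits)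
  with Suc.IH have "infinite ?T" by simp
  moreover have "inj_on ?lift ?T"
  proof (rule inj_onI)
    fix h h' assume "?lift h = ?lift h'"
    then have "?lift h (Suc i) = ?lift h' (Suc i)" for i by simp
    then show "h = h'" by (simp add: fun_eq_iff)
  qed
  moreover have "?lift ` ?T \<subseteq> sector_seqs_upto s f (Suc n)"
  proof
    fix x assume "x \<in> ?lift ` ?T"
    then obtain h where h: "h \<in> ?T" "x = ?lift h" by blast
    show "x \<in> sector_seqs_upto s f (Suc n)" unfolding sector_seqs_upto_def
    proof (intro CollectI allI impI)
      fix m assume "m < Suc n"
      with h show "sector s (f m) (Infinite (\<lambda>i. x (i + m)))"
        by (cases m) (simp_all add: addr_cons_Infinite[symmetric] sector_addr_cons_iff
          sector_seqs_upto_def)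
    qed
  qed
  ultimately show ?case using finite_imageD infinite_super by blast
qed

definition sector_limit :: "addr \<Rightarrow> (nat \<Rightarrow> int) \<Rightarrow> (nat \<Rightarrow> int) \<Rightarrow> bool" where
  "sector_limit s f g \<longleftrightarrow> (\<forall>N M. \<exists>h\<in>sector_seqs_upto s f N. \<forall>i<M. h i = g i)"

lemma ex_sector_limit: "\<exists>g. sector_limit s f g"
proof -
  obtain g where "\<And>N M. \<exists>h\<in>sector_seqs_upto s f N. \<forall>i<M. h i = g i"
  proof (rule finitely_branching_limit[where C = "\<lambda>i. {f i, f i + 1}"])
    show "sector_seqs_upto s f N \<noteq> {}" for N
      using infinite_sector_seqs_upto[of s f N] by (metis finite.emptyI)
    show "sector_seqs_upto s f N' \<subseteq> sector_seqs_upto s f N" if "N \<le> N'" for N N'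
      using that by (auto simp: sector_seqs_upto_def)
    show "h i \<in> {f i, f i + 1}" if "h \<in> sector_seqs_upto s f N" "i < N" for N h i
      using that sector_Infinite_digit[of s "f i" h i] by (auto simp: sector_seqs_upto_def)
  qed auto
  then show ?thesis by (auto simp: sector_limit_def)
qed

lemma sector_limit_closure:
  assumes "sector_limit s f g"
  shows "sector s (f m) (Infinite (\<lambda>i. g (i + m))) \<or> Infinite (\<lambda>i. g (i + m)) = bnd s (f m)
    \<or> Infinite (\<lambda>i. g (i + m)) = bnd s (f m + 1)"
proof (rule sector_closure)
  fix q
  obtain h where "h \<in> sector_seqs_upto s f (Suc m)" "\<forall>i<m + Suc q. h i = g i"
    using assms unfolding sector_limit_def by blast
  then show "\<exists>x'. sector s (f m) x' \<and>
    (\<forall>i\<le>q. addr_entry x' i = addr_entry (Infinite (\<lambda>i. g (i + m))) i)"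
    by (intro exI[of _ "Infinite (\<lambda>i. h (i + m))"]) (auto simp: sector_seqs_upto_def)
qed simp

lemma sector_limit_itin_sym:
  assumes "sector_limit s f g"
  shows "itin_sym s (Infinite (\<lambda>i. g (i + m))) =
    (if Infinite (\<lambda>i. g (i + Suc m)) = s then SBnd (g m) else SInt (f m))"
proof (cases "Infinite (\<lambda>i. g (i + Suc m)) = s")
  case True
  then have "Infinite (\<lambda>i. g (i + m)) = bnd s (g m)" by (simp add: Infinite_eq_bnd_iff)
  with True show ?thesis by simp
next
  case False
  then have "sector s (f m) (Infinite (\<lambda>i. g (i + m)))"
    using sector_limit_closure[OF assms, of m] by (auto simp: Infinite_eq_bnd_iff)
  with False show ?thesis by (simp add: itin_sym_sector)
qed

lemma sector_limit_digit_at_bnd: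
  assumes "sector_limit s f g" "Infinite (\<lambda>i. g (i + Suc m)) = s"
  shows "g m = f m \<or> g m = f m + 1"
proof -
  have "Infinite (\<lambda>i. g (i + m)) = bnd s (g m)" using assms(2) by (simp add: Infinite_eq_bnd_iff)
  with sector_limit_closure[OF assms(1), of m] show ?thesis
    by (auto simp: not_sector_bnd bnd_eq_bnd_iff)
qed

text \<open>All returns of the limit to s lie on the same side of s: a single finite approximation
  covers two returns, and shifting preserves the order of two sequences sharing the block between
  them.\<close>
lemma sector_limit_same_side:
  assumes lim: "sector_limit s f g"
    and "Infinite (\<lambda>i. g (i + Suc t)) = s" "Infinite (\<lambda>i. g (i + Suc t')) = s" "t \<le> t'"
  shows "g t = f t \<longleftrightarrow> g t' = f t'"
proof -
  obtain h where h: "h \<in> sector_seqs_upto s f (Suc t')" "\<forall>i<Suc (Suc t'). h i = g i"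
    using lim unfolding sector_limit_def by blast
  let ?H = "\<lambda>k. Infinite (\<lambda>i. h (i + k))"
  have digit: "g k = f k \<longleftrightarrow> \<not> addr_less (?H (Suc k)) s" if "k \<le> t'" for k
  proof -
    have "sector s (f k) (?H k)" using h(1) that by (simp add: sector_seqs_upto_def)
    then have "h k = (if addr_less (?H (Suc k)) s then f k + 1 else f k)"
      by (subst (asm) Infinite_eq_addr_cons) (simp add: sector_addr_cons_iff)
    with h(2) that show ?thesis by auto
  qed
  have shift: "i + (t' - t) + Suc t = i + Suc t'" for i using \<open>t \<le> t'\<close> by simp
  have "addr_less (?H (Suc t)) (Infinite (\<lambda>i. g (i + Suc t))) \<longleftrightarrow>
    addr_less ((addr_tl ^^ (t' - t)) (?H (Suc t)))
      ((addr_tl ^^ (t' - t)) (Infinite (\<lambda>i. g (i + Suc t))))"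
    using h(2) \<open>t \<le> t'\<close> by (intro addr_less_funpow_addr_tl) auto
  also have "\<dots> \<longleftrightarrow> addr_less (?H (Suc t')) (Infinite (\<lambda>i. g (i + Suc t')))"
    by (simp only: funpow_addr_tl_Infinite shift)
  finally have "addr_less (?H (Suc t)) s \<longleftrightarrow> addr_less (?H (Suc t')) s"
    using assms(2,3) by simp
  then show ?thesis using digit[of t] digit[of t'] \<open>t \<le> t'\<close> by simp
qed

lemma kneading_of_sector_limit:
  assumes lim: "sector_limit s f g" and hit: "Infinite (\<lambda>i. g (i + m)) = bnd s c"
  shows "kneading_plus s = SInf (\<lambda>i. f (i + Suc m)) \<or> kneading_minus s = SInf (\<lambda>i. f (i + Suc m))"
proof -
  let ?G = "\<lambda>k. Infinite (\<lambda>i. g (i + k))"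
  have s: "?G (Suc m) = s" using hit by (simp add: Infinite_eq_bnd_iff)
  have "itin s (?G (Suc m)) = SInf (\<lambda>i. itin_sym s (?G (i + Suc m)))"
    unfolding itin_Infinite by (simp only: add.assoc)
  then have itin_s: "itin s s = SInf (\<lambda>i. if ?G (Suc (i + Suc m)) = s then SBnd (g (i + Suc m))
    else SInt (f (i + Suc m)))"
    unfolding s sector_limit_itin_sym[OF lim] .
  have side: "g k = f k \<longleftrightarrow> g m = f m" if "?G (Suc k) = s" "m \<le> k" for k
    using sector_limit_same_side[OF lim s that(1) that(2)] by simp
  show ?thesis
  proof (cases "g m = f m")
    case True
    then have "kneading_plus s = SInf (\<lambda>i. f (i + Suc m))"
      using side by (auto simp: kneading_plus_def itin_plus_def itin_s fun_eq_iff)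
    then show ?thesis ..
  next
    case False
    have "g k = f k + 1" if "?G (Suc k) = s" "m \<le> k" for k
      using side[OF that] sector_limit_digit_at_bnd[OF lim that(1)] False by auto
    then have "kneading_minus s = SInf (\<lambda>i. f (i + Suc m))"
      by (auto simp: kneading_minus_def itin_minus_def itin_s fun_eq_iff)
    then show ?thesis ..
  qed
qed

lemma itin_exists_SInf:
  assumes "\<forall>k\<ge>1. sseq_shiftn k (SInf f) \<noteq> Some (kneading_plus s)
    \<and> sseq_shiftn k (SInf f) \<noteq> Some (kneading_minus s)"
  shows "\<exists>r. itin s r = SInf (\<lambda>i. SInt (f i))"
proof -
  obtain g where lim: "sector_limit s f g" using ex_sector_limit by blast
  show ?thesis
  proof (cases "g \<in> sector_seqs s f")
    case True
    then show ?thesis by (metis itin_Infinite_eq_SInt_iff)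
  next
    case False
    then obtain m where "\<not> sector s (f m) (Infinite (\<lambda>i. g (i + m)))"
      unfolding sector_seqs_def by blast
    then obtain c where "Infinite (\<lambda>i. g (i + m)) = bnd s c"
      using sector_limit_closure[OF lim] by blast
    then have "kneading_plus s = SInf (\<lambda>i. f (i + Suc m))
      \<or> kneading_minus s = SInf (\<lambda>i. f (i + Suc m))"
      by (rule kneading_of_sector_limit[OF lim])
    with assms[rule_format, of "Suc m"] show ?thesis by auto
  qed
qed

section \<open>Periodic itineraries\<close>

definition orbit_deviates_within :: "addr \<Rightarrow> nat \<Rightarrow> (nat \<Rightarrow> int) \<Rightarrow> bool" where
  "orbit_deviates_within s D w \<longleftrightarrow> (\<forall>m. \<exists>i<D. \<not> sector s (w (m + i)) ((addr_tl ^^ i) s))"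

lemma orbit_deviates_within_tl:
  "orbit_deviates_within s D w \<Longrightarrow> orbit_deviates_within s D (\<lambda>i. w (Suc i))"
  unfolding orbit_deviates_within_def by (metis add_Suc)

lemma sector_seqs_tl: "g \<in> sector_seqs s w \<Longrightarrow> (\<lambda>i. g (Suc i)) \<in> sector_seqs s (\<lambda>i. w (Suc i))"
  by (auto simp: sector_seqs_def simp flip: add_Suc_right)

text \<open>Two sector sequences that branch at the first digit have tails on opposite sides of s;
  a long common block of the tails would then force the orbit of s to follow w.\<close>
lemma sector_seqs_branch:
  assumes dev: "orbit_deviates_within s D w"
    and g: "g0 \<in> sector_seqs s w" "g1 \<in> sector_seqs s w" "g0 0 \<noteq> g1 0"
    and agree: "\<forall>i<n. g0 (Suc i) = g1 (Suc i)"
  shows "Suc n < D \<and> (\<forall>i<n. addr_entry s i = Some (of_int (g0 (Suc i))))"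
proof -
  let ?A = "\<lambda>g. Infinite (\<lambda>i. g (Suc i))"
  have digit: "?A g \<noteq> s \<and> g 0 = (if addr_less (?A g) s then w 0 + 1 else w 0)"
    if "g \<in> sector_seqs s w" for g
  proof -
    have "sector s (w 0) (Infinite (\<lambda>i. g (i + 0)))" using that unfolding sector_seqs_def by blast
    then have "sector s (w 0) (addr_cons (g 0) (Infinite (\<lambda>i. g (i + Suc 0))))"
      by (simp only: Infinite_eq_addr_cons[of g 0])
    then show ?thesis by (simp add: sector_addr_cons_iff)
  qed
  have "s \<noteq> Infty" using digit[OF g(1)] digit[OF g(2)] g(3) by auto
  then have side: "addr_less s (?A g)" if "g \<in> sector_seqs s w" "\<not> addr_less (?A g) s" for g
    using that digit addr_less_linear[of "?A g" s] by auto
  obtain a b where ab: "addr_less a s" "addr_less s b" "{a, b} = {?A g0, ?A g1}"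
  proof (cases "addr_less (?A g0) s")
    case True
    then have "\<not> addr_less (?A g1) s" using digit[OF g(1)] digit[OF g(2)] g(3) by auto
    with True side[OF g(2)] show thesis by (intro that[of "?A g0" "?A g1"]) auto
  next
    case False
    then have "addr_less (?A g1) s"
      using digit[OF g(1)] digit[OF g(2)] g(3) by (auto split: if_splits)
    with False side[OF g(1)] show thesis by (intro that[of "?A g1" "?A g0"]) auto
  qed
  have "\<forall>i<n. addr_entry a i = addr_entry b i"
    using ab(3) agree by (auto simp: doubleton_eq_iff)
  from addr_between_common_prefix[OF ab(1,2) this] have
    entries: "\<forall>i<n. addr_entry s i = addr_entry a i" and
    between: "\<forall>i\<le>n. addr_less ((addr_tl ^^ i) a) ((addr_tl ^^ i) s) \<and>
      addr_less ((addr_tl ^^ i) s) ((addr_tl ^^ i) b)" by blast+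
  have "sector s (w (Suc i)) ((addr_tl ^^ i) (?A g))" if "g \<in> sector_seqs s w" for g i
  proof -
    have "sector s (w (Suc i)) (Infinite (\<lambda>k. g (k + Suc i)))"
      using that unfolding sector_seqs_def by blast
    then show ?thesis by (simp add: funpow_addr_tl_Infinite)
  qed
  then have "sector s (w (Suc i)) ((addr_tl ^^ i) a)" "sector s (w (Suc i)) ((addr_tl ^^ i) b)"
    for i
    using ab(3) g(1,2) by (auto simp: doubleton_eq_iff)
  then have follows: "sector s (w (1 + i)) ((addr_tl ^^ i) s)" if "i \<le> n" for i
    using between that sector_between by (metis plus_1_eq_Suc)
  obtain i where "i < D" "\<not> sector s (w (1 + i)) ((addr_tl ^^ i) s)"
    using dev unfolding orbit_deviates_within_def by blast
  with follows have "Suc n < D" by (meson not_less_eq_eq order_le_less_trans)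
  moreover have "\<forall>i<n. addr_entry s i = Some (of_int (g0 (Suc i)))"
    using entries ab(3) agree by (auto simp: doubleton_eq_iff)
  ultimately show ?thesis ..
qed

text \<open>Counting initial blocks: passing from length n to n+1 at most one new block can split into
  two, namely the one spelling the first n entries of s, and only while the orbit of s still
  follows w.\<close>
lemma card_prefixes_sector_seqs:
  assumes "orbit_deviates_within s D w"
  shows "finite ((\<lambda>g. map g [0..<n]) ` sector_seqs s w) \<and>
    card ((\<lambda>g. map g [0..<n]) ` sector_seqs s w) \<le> min n D + 1"
  using assms
proof (induction n arbitrary: w)
  case 0
  have sub: "(\<lambda>g. map g [0..<0]) ` sector_seqs s w \<subseteq> {[]}" by auto
  then have "finite ((\<lambda>g. map g [0..<0]) ` sector_seqs s w)" by (rule finite_subset) simp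
  with card_mono[OF _ sub] show ?case by simp
next
  case (Suc n)
  let ?X = "sector_seqs s w" and ?Y = "sector_seqs s (\<lambda>i. w (Suc i))"
  let ?P = "(\<lambda>g. map g [0..<n]) ` ?Y"
  define L where "L c = (\<lambda>g. map (\<lambda>i. g (Suc i)) [0..<n]) ` {g \<in> ?X. g 0 = c}" for c
  let ?U = "Cons (w 0) ` L (w 0) \<union> Cons (w 0 + 1) ` L (w 0 + 1)"
  from Suc.IH[OF orbit_deviates_within_tl[OF Suc.prems]]
  have IH: "finite ?P" "card ?P \<le> min n D + 1" by auto
  have L_sub: "L c \<subseteq> ?P" for c
    unfolding L_def using sector_seqs_tl by fastforce
  then have fin_L: "finite (L c)" for c using IH(1) finite_subset by blast
  have sub: "(\<lambda>g. map g [0..<Suc n]) ` ?X \<subseteq> ?U"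
  proof
    fix p assume "p \<in> (\<lambda>g. map g [0..<Suc n]) ` ?X"
    then obtain g where g: "g \<in> ?X" "p = g 0 # map (\<lambda>i. g (Suc i)) [0..<n]"
      by (auto simp: map_upt_Suc simp del: upt_Suc)
    then have "sector s (w 0) (Infinite (\<lambda>i. g (i + 0)))" unfolding sector_seqs_def by blast
    then have "g 0 = w 0 \<or> g 0 = w 0 + 1" by (rule sector_Infinite_digit)
    with g show "p \<in> ?U" unfolding L_def by auto
  qed
  have branch: "card (L (w 0) \<inter> L (w 0 + 1)) \<le> (if Suc n < D then 1 else 0)"
  proof -
    define q where "q = map (\<lambda>i. \<lfloor>the (addr_entry s i)\<rfloor>) [0..<n]"
    have "L (w 0) \<inter> L (w 0 + 1) \<subseteq> (if Suc n < D then {q} else {})"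
    proof
      fix l assume "l \<in> L (w 0) \<inter> L (w 0 + 1)"
      then obtain g0 g1 where g: "g0 \<in> ?X" "g1 \<in> ?X" "g0 0 \<noteq> g1 0"
        and l: "l = map (\<lambda>i. g0 (Suc i)) [0..<n]" "l = map (\<lambda>i. g1 (Suc i)) [0..<n]"
        unfolding L_def by auto
      then have "\<forall>i<n. g0 (Suc i) = g1 (Suc i)" by (simp add: map_eq_conv)
      from sector_seqs_branch[OF Suc.prems g this] l(1)
      show "l \<in> (if Suc n < D then {q} else {})" by (simp add: q_def)
    qed
    then have "card (L (w 0) \<inter> L (w 0 + 1)) \<le> card (if Suc n < D then {q} else {})"
      by (intro card_mono) simp_all
    then show ?thesis by (cases "Suc n < D") simp_all
  qed
  have "card ((\<lambda>g. map g [0..<Suc n]) ` ?X) \<le> card ?U"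
    using sub fin_L by (intro card_mono) auto
  also have "\<dots> \<le> card (Cons (w 0) ` L (w 0)) + card (Cons (w 0 + 1) ` L (w 0 + 1))"
    by (rule card_Un_le)
  also have "\<dots> \<le> card (L (w 0)) + card (L (w 0 + 1))"
    by (intro add_mono card_image_le fin_L)
  also have "\<dots> = card (L (w 0) \<union> L (w 0 + 1)) + card (L (w 0) \<inter> L (w 0 + 1))"
    by (intro card_Un_Int fin_L)
  also have "\<dots> \<le> card ?P + (if Suc n < D then 1 else 0)"
    using L_sub IH(1) branch by (intro add_mono card_mono) auto
  finally have "card ((\<lambda>g. map g [0..<Suc n]) ` ?X) \<le> card ?P + (if Suc n < D then 1 else 0)" .
  moreover have "\<And>z p. z \<le> p + (if Suc n < D then 1 else 0) \<Longrightarrow> p \<le> min n D + 1 \<Longrightarrow>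
    z \<le> min (Suc n) D + 1" by (auto simp: min_def split: if_splits)
  ultimately have "card ((\<lambda>g. map g [0..<Suc n]) ` ?X) \<le> min (Suc n) D + 1" using IH(2) by blast
  moreover have "finite ((\<lambda>g. map g [0..<Suc n]) ` ?X)"
    by (intro finite_subset[OF sub]) (simp add: fin_L)
  ultimately show ?case by blast
qed

lemma ex_inj_on_prefix:
  fixes F :: "(nat \<Rightarrow> 'a) set"
  assumes "finite F"
  obtains n where "inj_on (\<lambda>g. map g [0..<n]) F"
proof -
  have "eventually (\<lambda>n. a \<noteq> b \<longrightarrow> map a [0..<n] \<noteq> map b [0..<n]) sequentially" for a b :: "nat \<Rightarrow> 'a"
  proof (cases "a = b")
    case False
    then obtain i where "a i \<noteq> b i" by auto
    then show ?thesis by (intro eventually_sequentiallyI[of "Suc i"]) (auto simp: map_eq_conv)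
  qed simp
  then have "eventually (\<lambda>n. \<forall>(a, b)\<in>F \<times> F. a \<noteq> b \<longrightarrow> map a [0..<n] \<noteq> map b [0..<n]) sequentially"
    using assms by (intro eventually_ball_finite) auto
  then obtain n where "\<forall>(a, b)\<in>F \<times> F. a \<noteq> b \<longrightarrow> map a [0..<n] \<noteq> map b [0..<n]"
    using eventually_happens'[OF sequentially_bot] by blast
  then show thesis by (intro that[of n]) (auto simp: inj_on_def)
qed

lemma finite_sector_seqs:
  assumes "orbit_deviates_within s D w"
  shows "finite (sector_seqs s w)"
proof (rule ccontr)
  assume "infinite (sector_seqs s w)"
  then obtain F where F: "F \<subseteq> sector_seqs s w" "finite F" "card F = D + 2"
    using infinite_arbitrarily_large by blast
  obtain n where inj: "inj_on (\<lambda>g. map g [0..<n]) F" using ex_inj_on_prefix[OF F(2)] .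
  have "card F = card ((\<lambda>g. map g [0..<n]) ` F)" using card_image[OF inj] by simp
  also have "\<dots> \<le> card ((\<lambda>g. map g [0..<n]) ` sector_seqs s w)"
    using card_prefixes_sector_seqs[OF assms, of n] F(1) by (intro card_mono) auto
  also have "\<dots> \<le> min n D + 1" using card_prefixes_sector_seqs[OF assms, of n] by blast
  also have "\<dots> \<le> D + 1" by simp
  finally show False using F(3) by simp
qed

lemma periodic_mod:
  fixes f :: "nat \<Rightarrow> 'a"
  assumes "\<forall>i. f (i + p) = f i"
  shows "f i = f (i mod p)"
proof (induction i rule: less_induct)
  case (less i)
  show ?case
  proof (cases "0 < p \<and> p \<le> i")
    case True
    then have "f i = f (i - p)" using assms[rule_format, of "i - p"] by simp
    also have "\<dots> = f ((i - p) mod p)" using less True by simp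
    also have "(i - p) mod p = i mod p" using True by (simp add: le_mod_geq)
    finally show ?thesis .
  qed auto
qed

lemma orbit_deviates_if_periodic:
  assumes per: "\<forall>i. f (i + p) = f i" and "p \<ge> 1"
    and hyp: "\<forall>k\<ge>1. sseq_shiftn k (SInf f) \<noteq> Some (kneading_plus s)"
  obtains D where "orbit_deviates_within s D f"
proof -
  let ?follows = "\<lambda>m D. \<forall>i<D. sector s (f (m + i)) ((addr_tl ^^ i) s)"
  have "\<exists>D. orbit_deviates_within s D f"
  proof (rule ccontr)
    assume none: "\<nexists>D. orbit_deviates_within s D f"
    have follows: "\<exists>m\<in>{p..<2*p}. ?follows m D" for D
    proof -
      from none obtain m where "?follows m D" unfolding orbit_deviates_within_def by blast
      moreover have "f (m + i) = f (m mod p + p + i)" for i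
      proof -
        have "(m mod p + p + i) mod p = (m mod p + i) mod p"
          by (metis add.assoc add.commute mod_add_self2)
        also have "\<dots> = (m + i) mod p" by (simp add: mod_add_left_eq)
        finally show ?thesis
          using periodic_mod[OF per, of "m + i"] periodic_mod[OF per, of "m mod p + p + i"] by simp
      qed
      ultimately show ?thesis using \<open>p \<ge> 1\<close> by (intro bexI[of _ "m mod p + p"]) auto
    qed
    have "\<exists>m\<in>{p..<2*p}. \<forall>D. ?follows m D"
    proof (rule ccontr)
      assume never: "\<not> ?thesis"
      have "eventually (\<lambda>D. \<not> ?follows m D) sequentially" if "m \<in> {p..<2*p}" for m
      proof -
        from never that obtain D0 where "\<not> ?follows m D0" by blast
        then show ?thesis by (intro eventually_sequentiallyI[of D0]) (meson order_less_le_trans)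
      qed
      then have "eventually (\<lambda>D. \<forall>m\<in>{p..<2*p}. \<not> ?follows m D) sequentially"
        by (intro eventually_ball_finite) auto
      then obtain D where "\<forall>m\<in>{p..<2*p}. \<not> ?follows m D"
        using eventually_happens'[OF sequentially_bot] by blast
      with follows[of D] show False by blast
    qed
    then obtain m where "m \<ge> p" "\<forall>i. sector s (f (m + i)) ((addr_tl ^^ i) s)"
      by (metis atLeastLessThan_iff lessI)
    then have "itin s s = map_sseq SInt (SInf (\<lambda>i. f (i + m)))"
      using itin_of_sectors[of s "\<lambda>i. f (m + i)" s] by (simp add: comp_def add.commute)
    then have "kneading_plus s = SInf (\<lambda>i. f (i + m))"
      unfolding kneading_plus_def by (rule itin_plus_SInt)
    moreover have "m \<ge> 1" using \<open>m \<ge> p\<close> \<open>p \<ge> 1\<close> by simp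
    ultimately show False using hyp by auto
  qed
  then show thesis using that by blast
qed

lemma itin_periodic_imp_addr_periodic:
  assumes hyp: "\<forall>k\<ge>1. sseq_shiftn k u \<noteq> Some (kneading_plus s)"
    and "sseq_periodic u" and itin_r: "itin s r = map_sseq SInt u"
  shows "addr_periodic r"
proof -
  obtain p where p: "p \<ge> 1" "sseq_shiftn p u = Some u"
    using \<open>sseq_periodic u\<close> unfolding sseq_periodic_def by blast
  obtain f where u: "u = SInf f"
  proof (cases u)
    case (SFin xs)
    with p have "drop p xs = xs" "p \<le> length xs" by (auto split: if_splits)
    then have "length xs - p = length xs" by (metis length_drop)
    with p(1) \<open>p \<le> length xs\<close> have False by linarith
    then show ?thesis ..
  qed
  have per: "\<forall>i. f (i + p) = f i" using p(2) u by (simp add: fun_eq_iff)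
  have itin_f: "itin s r = SInf (\<lambda>i. SInt (f i))" using itin_r u by (simp add: comp_def)
  then obtain g where r: "r = Infinite g" by (rule itin_eq_SInf_imp_Infinite)
  with itin_f have g: "g \<in> sector_seqs s f" by (simp add: itin_Infinite_eq_SInt_iff)
  obtain D where "orbit_deviates_within s D f"
    using orbit_deviates_if_periodic[OF per p(1)] hyp u by blast
  then have fin: "finite (sector_seqs s f)" by (rule finite_sector_seqs)
  define \<phi> where "\<phi> k = (\<lambda>i. g (i + k * p))" for k
  have \<phi>_in: "\<phi> k \<in> sector_seqs s f" for k
  proof -
    have "f (m + k * p) = f m" for m
      using periodic_mod[OF per, of "m + k * p"] periodic_mod[OF per, of m] by simp
    moreover have "sector s (f (m + k * p)) (Infinite (\<lambda>i. g (i + (m + k * p))))" for m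
      using g unfolding sector_seqs_def by blast
    ultimately show ?thesis by (simp add: sector_seqs_def \<phi>_def add.assoc)
  qed
  have "\<not> inj \<phi>"
  proof
    assume "inj \<phi>"
    then have "infinite (range \<phi>)" by (simp add: finite_image_iff)
    with \<phi>_in fin show False by (metis finite_subset image_subsetI)
  qed
  then obtain a b where ab: "a < b" "\<phi> a = \<phi> b" by (metis injI linorder_neqE)
  have shift_b: "i + a * p + (b - a) * p = i + b * p" for i
    using ab(1) by (simp add: diff_mult_distrib)
  have "addr_shiftn (a * p) (Infinite (\<phi> (b - a))) = Some (Infinite (\<phi> a))"
    using ab(2) by (simp add: addr_shiftn_Infinite \<phi>_def shift_b)
  moreover have "addr_shiftn (a * p) r = Some (Infinite (\<phi> a))"
    by (simp add: r addr_shiftn_Infinite \<phi>_def)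
  moreover have "itin s (Infinite (\<phi> (b - a))) = itin s r"
    using \<phi>_in itin_f by (simp add: itin_Infinite_eq_SInt_iff)
  ultimately have "Infinite (\<phi> (b - a)) = r" by (rule itin_inj_on_shiftn_preimage)
  then have "addr_shiftn ((b - a) * p) r = Some r"
    by (simp add: r addr_shiftn_Infinite \<phi>_def)
  moreover have "(b - a) * p \<ge> 1" using ab(1) p(1) by simp
  ultimately show ?thesis unfolding addr_periodic_def by blast
qed

theorem lemma3p6:
  fixes s :: addr
  shows "(\<forall>u :: int sseq.
            (\<forall>k\<ge>1. sseq_shiftn k u \<noteq> Some (kneading_plus s)
                  \<and> sseq_shiftn k u \<noteq> Some (kneading_minus s)) \<longrightarrow>
            (\<exists>r. itin s r = map_sseq SInt u) \<and>
            (sseq_periodic u \<longrightarrow> (\<forall>r. itin s r = map_sseq SInt u \<longrightarrow> addr_periodic r)))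
       \<and> (\<forall>t k r1 r2. addr_shiftn k r1 = Some t \<longrightarrow> addr_shiftn k r2 = Some t \<longrightarrow>
            itin s r1 = itin s r2 \<longrightarrow> r1 = r2)
       \<and> (\<forall>r1 r2. addr_intermediate r1 \<longrightarrow> addr_intermediate r2 \<longrightarrow>
            itin s r1 = itin s r2 \<longrightarrow> r1 = r2)"
proof (intro conjI allI impI)
  fix u :: "int sseq"
  assume hyp: "\<forall>k\<ge>1. sseq_shiftn k u \<noteq> Some (kneading_plus s)
    \<and> sseq_shiftn k u \<noteq> Some (kneading_minus s)"
  show "\<exists>r. itin s r = map_sseq SInt u"
  proof (cases u)
    case (SFin xs)
    with hyp show ?thesis using itin_exists_SFin[of xs s] by simp
  next
    case (SInf f)
    with hyp show ?thesis using itin_exists_SInf[of f s] by (simp add: comp_def)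
  qed
  show "addr_periodic r" if "sseq_periodic u" "itin s r = map_sseq SInt u" for r
    using itin_periodic_imp_addr_periodic hyp that by blast
qed (use itin_inj_on_shiftn_preimage itin_inj_on_intermediate in blast)+

end
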